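(* Let $d\ge 1$, let $p_t(x)=(2\pi t)^{-d/2}e^{-|x|^2/(2t)}$ ($t>0$, $x\in\mathbb{R}^d$) be the heat kernel, and for a nonnegative kernel $f$ on $\mathbb{R}^d$, $u,v>0$ and $y,z\in\mathbb{R}^d$ put $$J_f(u,v,y,z)=\int_{\mathbb{R}^d}\int_{\mathbb{R}^d}p_u(x-y)\,p_v(x'-z)\,f(x-x')\,dx\,dx'.$$ (i) If $f$ is the Riesz kernel of order $\alpha\in(0,d)$, or the Bessel kernel of order $\alpha\in(0,d)$, then there is a constant $D_{\alpha,d}>0$ depending only on $\alpha$ and $d$ such that $J_f(u,v,y,z)\le D_{\alpha,d}\,(u+v)^{-(d-\alpha)/2}$ for all $u,v>0$ and all $y,z\in\mathbb{R}^d$. (ii) If $f$ is the heat kernel of order $\alpha>0$, or the Poisson kernel of order $\alpha>0$, then there is a constant $C_{\alpha,d}$ such that $J_f(u,v,y,z)\le C_{\alpha,d}$ for all $u,v>0$ and all $y,z\in\mathbb{R}^d$.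
   Context: $|x|$ denotes the Euclidean norm on $\mathbb{R}^d$. The kernels are: Riesz kernel of order $\alpha$ ($0<\alpha<d$): $f(x)=\gamma_{\alpha,d}|x|^{-d+\alpha}$ with $\gamma_{\alpha,d}=\Gamma((d-\alpha)/2)2^{-\alpha}\pi^{-d/2}/\Gamma(\alpha/2)$. Bessel kernel of order $\alpha>0$: $f(x)=\gamma'_\alpha\int_0^\infty w^{(\alpha-d)/2-1}e^{-w}e^{-|x|^2/(4w)}\,dw$ with $\gamma'_\alpha=(4\pi)^{\alpha/2}\Gamma(\alpha/2)$. Heat kernel of order $\alpha>0$: $f(x)=(2\pi\alpha)^{-d/2}e^{-|x|^2/(2\alpha)}$. Poisson kernel of order $\alpha>0$: $f(x)=C_d\,\alpha\,(|x|^2+\alpha^2)^{-(d+1)/2}$ with $C_d=\pi^{-(d+1)/2}\Gamma((d+1)/2)$. *)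

theory Defs
  imports "HOL-Analysis.Analysis"
begin

text \<open>Points of R^d are vectors of type real ^ 'n, with d = CARD('n).\<close>

definition heat_p :: "real \<Rightarrow> real ^ 'n \<Rightarrow> real" where
  "heat_p t x = (2 * pi * t) powr (- real CARD('n) / 2) * exp (- (norm x)\<^sup>2 / (2 * t))"

definition riesz_kernel :: "real \<Rightarrow> real ^ 'n \<Rightarrow> real" where
  "riesz_kernel \<alpha> x =
     (let d = real CARD('n) in
      Gamma ((d - \<alpha>) / 2) * 2 powr (- \<alpha>) * pi powr (- d / 2) / Gamma (\<alpha> / 2)
      * norm x powr (- d + \<alpha>))"

definition bessel_kernel :: "real \<Rightarrow> real ^ 'n \<Rightarrow> real" where
  "bessel_kernel \<alpha> x =
     (let d = real CARD('n) in
      (4 * pi) powr (\<alpha> / 2) * Gamma (\<alpha> / 2) *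
      (LINT w|lborel. indicator {0<..} w *
         (w powr ((\<alpha> - d) / 2 - 1) * exp (- w) * exp (- (norm x)\<^sup>2 / (4 * w)))))"

definition heat_kernel :: "real \<Rightarrow> real ^ 'n \<Rightarrow> real" where
  "heat_kernel \<alpha> x = (2 * pi * \<alpha>) powr (- real CARD('n) / 2) * exp (- (norm x)\<^sup>2 / (2 * \<alpha>))"

definition poisson_kernel :: "real \<Rightarrow> real ^ 'n \<Rightarrow> real" where
  "poisson_kernel \<alpha> x =
     (let d = real CARD('n) in
      pi powr (- (d + 1) / 2) * Gamma ((d + 1) / 2) * \<alpha> * ((norm x)\<^sup>2 + \<alpha>\<^sup>2) powr (- (d + 1) / 2))"

definition Jf :: "(real ^ 'n \<Rightarrow> real) \<Rightarrow> real \<Rightarrow> real \<Rightarrow> real ^ 'n \<Rightarrow> real ^ 'n \<Rightarrow> ennreal" where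
  "Jf f u v y z =
     (\<integral>\<^sup>+ x'. (\<integral>\<^sup>+ x. ennreal (heat_p u (x - y) * heat_p v (x' - z) * f (x - x')) \<partial>lborel) \<partial>lborel)"

end

theory Submission
  imports Defs "HOL-Probability.Probability"
begin

text \<open>
  Since the heat kernels are probability densities, J_f is at most sup f; this settles the
  heat and Poisson kernels, which are maximal at the origin. The Riesz and Bessel kernels are
  dominated by M |w|^(alpha-d). With beta = (d - alpha)/d in (0,1) one has
  |w|^(alpha-d) <= prod_b |w_b|^(-beta), so the Gaussian integral of |x - c|^(alpha-d)
  factorises into one-dimensional integrals, each at most (2/(1-beta) + 1) t^(-beta/2)
  (split at |s - c| = sqrt t). As J_f is symmetric in (u,y) and (v,z), integrating first
  against the Gaussian of larger variance gives J_f <= M K^d max(u,v)^(-(d-alpha)/2), and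
  max(u,v) >= (u+v)/2. The Bessel kernel is dominated by a multiple of the Riesz kernel via
  e^(-w) <= 1 and e^(-c/w) <= (d w/c)^d.
\<close>

lemma heat_p_nonneg: "0 \<le> heat_p t x"
  by (simp add: heat_p_def)

lemma borel_measurable_heat_p[measurable]: "heat_p t \<in> borel_measurable borel"
  unfolding heat_p_def[abs_def] by measurable

lemma heat_p_diff_eq_prod_normal_density:
  fixes x a :: "real ^ 'n"
  assumes t: "0 < t"
  shows "heat_p t (x - a) = (\<Prod>b\<in>Basis. normal_density (a \<bullet> b) (sqrt t) (x \<bullet> b))"
proof -
  have "(\<Prod>b\<in>Basis. normal_density (a \<bullet> b) (sqrt t) (x \<bullet> b))
      = (\<Prod>b\<in>(Basis::(real^'n) set). (2*pi*t) powr (-1/2) * exp (- ((x - a) \<bullet> b)\<^sup>2 / (2 * t)))"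
    using t by (simp add: normal_density_def powr_minus_divide powr_half_sqrt inner_diff_left)
  also have "\<dots> = ((2*pi*t) powr (-1/2)) ^ CARD('n) * exp (\<Sum>b\<in>(Basis::(real^'n) set). - ((x - a) \<bullet> b)\<^sup>2 / (2 * t))"
    by (simp add: prod.distrib exp_sum)
  also have "(\<Sum>b\<in>(Basis::(real^'n) set). - ((x - a) \<bullet> b)\<^sup>2 / (2 * t)) = - (norm (x - a))\<^sup>2 / (2 * t)"
    by (simp add: sum_divide_distrib[symmetric] sum_negf euclidean_inner[of "x - a" "x - a", symmetric]
                  power2_eq_square dot_square_norm)
  also have "((2*pi*t) powr (-1/2)) ^ CARD('n) = (2*pi*t) powr (- real CARD('n) / 2)"
    using t by (simp add: powr_realpow[symmetric] powr_powr)
  finally show ?thesis by (simp add: heat_p_def)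
qed

lemma nn_integral_normal_density:
  "0 < \<sigma> \<Longrightarrow> (\<integral>\<^sup>+x. ennreal (normal_density \<mu> \<sigma> x) \<partial>lborel) = 1"
  by (simp add: nn_integral_eq_integral)

lemma nn_integral_heat_p:
  fixes a :: "real ^ 'n"
  assumes t: "0 < t"
  shows "(\<integral>\<^sup>+x. ennreal (heat_p t (x - a)) \<partial>lborel) = 1"
proof -
  have "(\<integral>\<^sup>+x. ennreal (heat_p t (x - a)) \<partial>lborel)
      = (\<integral>\<^sup>+x. (\<Prod>b\<in>Basis. ennreal (normal_density (a \<bullet> b) (sqrt t) (x \<bullet> b))) \<partial>lborel)"
    using t by (simp add: heat_p_diff_eq_prod_normal_density prod_ennreal)
  also have "\<dots> = (\<Prod>b\<in>(Basis::(real^'n) set). \<integral>\<^sup>+s. ennreal (normal_density (a \<bullet> b) (sqrt t) s) \<partial>lborel)"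
    by (rule nn_integral_lborel_prod) auto
  also have "\<dots> = 1" using t by (simp add: nn_integral_normal_density)
  finally show ?thesis .
qed

lemma Jf_mono:
  fixes f g :: "real ^ 'n \<Rightarrow> real"
  assumes "\<And>w. w \<noteq> 0 \<Longrightarrow> f w \<le> g w"
  shows "Jf f u v y z \<le> Jf g u v y z"
  unfolding Jf_def
proof (rule nn_integral_mono, rule nn_integral_mono_AE)
  fix x' :: "real ^ 'n"
  show "AE x in lborel. ennreal (heat_p u (x - y) * heat_p v (x' - z) * f (x - x'))
                     \<le> ennreal (heat_p u (x - y) * heat_p v (x' - z) * g (x - x'))"
    using AE_lborel_singleton[of x']
    by eventually_elim (auto intro!: ennreal_leI mult_left_mono assms simp: heat_p_nonneg)
qed

lemma Jf_eq_nn_integral_inner: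
  fixes g :: "real ^ 'n \<Rightarrow> real" and y z :: "real ^ 'n"
  assumes [measurable]: "g \<in> borel_measurable borel"
  shows "Jf g u v y z =
    (\<integral>\<^sup>+x'. ennreal (heat_p v (x' - z)) * (\<integral>\<^sup>+x. ennreal (heat_p u (x - y) * g (x - x')) \<partial>lborel) \<partial>lborel)"
  unfolding Jf_def
proof (intro nn_integral_cong)
  fix x' :: "real ^ 'n"
  have "(\<integral>\<^sup>+x. ennreal (heat_p u (x - y) * heat_p v (x' - z) * g (x - x')) \<partial>lborel)
      = (\<integral>\<^sup>+x. ennreal (heat_p v (x' - z)) * ennreal (heat_p u (x - y) * g (x - x')) \<partial>lborel)"
    by (simp add: ennreal_mult'[OF heat_p_nonneg, symmetric] ac_simps)
  also have "\<dots> = ennreal (heat_p v (x' - z)) * (\<integral>\<^sup>+x. ennreal (heat_p u (x - y) * g (x - x')) \<partial>lborel)"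
    by (rule nn_integral_cmult) measurable
  finally show "(\<integral>\<^sup>+x. ennreal (heat_p u (x - y) * heat_p v (x' - z) * g (x - x')) \<partial>lborel)
      = ennreal (heat_p v (x' - z)) * (\<integral>\<^sup>+x. ennreal (heat_p u (x - y) * g (x - x')) \<partial>lborel)" .
qed

lemma Jf_le_of_inner_bound:
  fixes g :: "real ^ 'n \<Rightarrow> real" and y z :: "real ^ 'n"
  assumes [measurable]: "g \<in> borel_measurable borel" and v: "0 < v"
    and inner: "\<And>x'. (\<integral>\<^sup>+x. ennreal (heat_p u (x - y) * g (x - x')) \<partial>lborel) \<le> B"
  shows "Jf g u v y z \<le> B"
proof -
  have "Jf g u v y z \<le> (\<integral>\<^sup>+x'. ennreal (heat_p v (x' - z)) * B \<partial>lborel)"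
    unfolding Jf_eq_nn_integral_inner[OF assms(1)]
    by (intro nn_integral_mono mult_left_mono inner) simp
  also have "\<dots> = B"
    using nn_integral_heat_p[OF v, of z] by (simp add: nn_integral_multc)
  finally show ?thesis .
qed

lemma Jf_swap:
  fixes g :: "real ^ 'n \<Rightarrow> real"
  assumes [measurable]: "g \<in> borel_measurable borel" and g_even: "\<And>w. g (- w) = g w"
  shows "Jf g u v y z = Jf g v u z y"
proof -
  have "Jf g u v y z = (\<integral>\<^sup>+x. \<integral>\<^sup>+x'. ennreal (heat_p u (x - y) * heat_p v (x' - z) * g (x - x')) \<partial>lborel \<partial>lborel)"
    unfolding Jf_def by (rule lborel_pair.Fubini') measurable
  also have "\<dots> = Jf g v u z y"
    unfolding Jf_def using g_even[of "_ - _"] by (simp add: ac_simps)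
  finally show ?thesis .
qed

lemma Jf_le_of_bounded:
  fixes f :: "real ^ 'n \<Rightarrow> real" and y z :: "real ^ 'n"
  assumes f: "\<And>w. f w \<le> M" and u: "0 < u" and v: "0 < v"
  shows "Jf f u v y z \<le> ennreal M"
proof -
  have "Jf f u v y z \<le> Jf (\<lambda>_. M) u v y z"
    by (rule Jf_mono) (rule f)
  also have "\<dots> \<le> ennreal M"
  proof (rule Jf_le_of_inner_bound[OF _ v])
    fix x'
    show "(\<integral>\<^sup>+x. ennreal (heat_p u (x - y) * M) \<partial>lborel) \<le> ennreal M"
    proof (cases "0 \<le> M")
      case True
      then show ?thesis by (simp add: ennreal_mult'' nn_integral_multc nn_integral_heat_p[OF u])
    qed (simp add: ennreal_neg mult_nonneg_nonpos heat_p_nonneg)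
  qed simp
  finally show ?thesis .
qed

lemma nn_integral_powr_Icc:
  assumes p: "0 < p" and c: "0 \<le> c"
  shows "(\<integral>\<^sup>+w. ennreal (w powr (p - 1)) * indicator {0..c} w \<partial>lborel) = ennreal (c powr p / p)"
proof -
  have "((\<lambda>w. w powr (p - 1)) has_integral (c powr (p - 1 + 1) / (p - 1 + 1))) {0..c}"
    using p c by (intro has_integral_powr_from_0) auto
  then show ?thesis by (subst nn_integral_has_integral_lebesgue') auto
qed

lemma nn_integral_powr_Ici:
  assumes a: "a < 0" and c: "0 < c"
  shows "(\<integral>\<^sup>+w. ennreal (w powr (a - 1)) * indicator {c..} w \<partial>lborel) = ennreal (- (c powr a) / a)"
proof -
  have "((\<lambda>w. w powr (a - 1)) has_integral (- (c powr (a - 1 + 1)) / (a - 1 + 1))) {c..}"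
    using a c by (intro has_integral_powr_to_inf) auto
  then show ?thesis using a by (subst nn_integral_has_integral_lebesgue') (auto simp: divide_nonpos_neg)
qed

text \<open>The value \<top> at 0 lets the product bound below hold also on the coordinate hyperplanes.\<close>

definition abs_neg_powr :: "real \<Rightarrow> real \<Rightarrow> ennreal" where
  "abs_neg_powr \<beta> s = (if s = 0 then \<top> else ennreal (\<bar>s\<bar> powr (- \<beta>)))"

lemma borel_measurable_abs_neg_powr[measurable]: "abs_neg_powr \<beta> \<in> borel_measurable borel"
  unfolding abs_neg_powr_def[abs_def] by measurable

lemma normal_density_le: "0 < \<sigma> \<Longrightarrow> normal_density \<mu> \<sigma> x \<le> 1 / \<sigma>"
proof -
  assume \<sigma>: "0 < \<sigma>"
  have "1 \<le> sqrt (2 * pi)" using pi_gt3 by simp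
  then have "\<sigma> \<le> sqrt (2 * pi * \<sigma>\<^sup>2)"
    using \<sigma> by (simp add: real_sqrt_mult)
  then have "1 / sqrt (2 * pi * \<sigma>\<^sup>2) \<le> 1 / \<sigma>"
    using \<sigma> by (intro divide_left_mono) auto
  moreover have "1 / sqrt (2 * pi * \<sigma>\<^sup>2) * exp (- (x - \<mu>)\<^sup>2 / (2 * \<sigma>\<^sup>2)) \<le> 1 / sqrt (2 * pi * \<sigma>\<^sup>2)"
    by (intro mult_left_le) auto
  ultimately show ?thesis
    unfolding normal_density_def by linarith
qed

lemma nn_integral_abs_neg_powr_Icc:
  assumes \<beta>: "0 < \<beta>" "\<beta> < 1" and r: "0 \<le> r"
  shows "(\<integral>\<^sup>+s. ennreal (\<bar>s - c\<bar> powr (- \<beta>)) * indicator {c - r..c + r} s \<partial>lborel)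
     \<le> 2 * ennreal (r powr (1 - \<beta>) / (1 - \<beta>))"
proof -
  define F where "F = (\<lambda>s::real. ennreal (s powr ((1 - \<beta>) - 1)) * indicator {0..r} s)"
  have [measurable]: "F \<in> borel_measurable borel" unfolding F_def by measurable
  have F: "(\<integral>\<^sup>+s. F s \<partial>lborel) = ennreal (r powr (1 - \<beta>) / (1 - \<beta>))"
    unfolding F_def using \<beta> r by (intro nn_integral_powr_Icc) auto
  have "(\<integral>\<^sup>+s. ennreal (\<bar>s - c\<bar> powr (- \<beta>)) * indicator {c - r..c + r} s \<partial>lborel)
      \<le> (\<integral>\<^sup>+s. F (s - c) + F (c - s) \<partial>lborel)"
    by (intro nn_integral_mono) (auto simp: F_def indicator_def abs_if)
  also have "\<dots> = (\<integral>\<^sup>+s. F (s - c) \<partial>lborel) + (\<integral>\<^sup>+s. F (c - s) \<partial>lborel)"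
    by (intro nn_integral_add) auto
  also have "\<dots> = 2 * (\<integral>\<^sup>+s. F s \<partial>lborel)"
    using nn_integral_real_affine[of "\<lambda>s. F (s - c)" 1 c] nn_integral_real_affine[of "\<lambda>s. F (c - s)" "-1" c]
    by (simp add: mult_2)
  finally show ?thesis
    by (simp add: F)
qed

lemma normal_density_abs_neg_powr_le:
  assumes s: "s \<noteq> c" and \<beta>: "0 \<le> \<beta>" and \<sigma>: "0 < \<sigma>"
  shows "ennreal (normal_density \<mu> \<sigma> s) * abs_neg_powr \<beta> (s - c)
     \<le> ennreal (1 / \<sigma>) * (ennreal (\<bar>s - c\<bar> powr (- \<beta>)) * indicator {c - \<sigma>..c + \<sigma>} s)
       + ennreal (\<sigma> powr (- \<beta>)) * ennreal (normal_density \<mu> \<sigma> s)"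
proof -
  have s: "abs_neg_powr \<beta> (s - c) = ennreal (\<bar>s - c\<bar> powr (- \<beta>))"
    using s by (simp add: abs_neg_powr_def)
  show ?thesis
  proof (cases "\<bar>s - c\<bar> \<le> \<sigma>")
    case True
    have "normal_density \<mu> \<sigma> s * \<bar>s - c\<bar> powr (- \<beta>) \<le> 1 / \<sigma> * \<bar>s - c\<bar> powr (- \<beta>)"
      using normal_density_le[OF \<sigma>] by (intro mult_right_mono) auto
    then have "ennreal (normal_density \<mu> \<sigma> s) * abs_neg_powr \<beta> (s - c)
        \<le> ennreal (1 / \<sigma>) * (ennreal (\<bar>s - c\<bar> powr (- \<beta>)) * indicator {c - \<sigma>..c + \<sigma>} s)"
      using True \<sigma> by (simp add: s ennreal_mult[symmetric] ennreal_leI abs_le_iff)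
    then show ?thesis by (rule order_trans) simp
  next
    case False
    have "\<bar>s - c\<bar> powr (- \<beta>) \<le> \<sigma> powr (- \<beta>)"
      using False \<sigma> \<beta> by (intro powr_mono2') auto
    then have "ennreal (normal_density \<mu> \<sigma> s) * abs_neg_powr \<beta> (s - c)
        \<le> ennreal (\<sigma> powr (- \<beta>)) * ennreal (normal_density \<mu> \<sigma> s)"
      by (simp add: s mult.commute mult_left_mono ennreal_leI)
    then show ?thesis by (rule order_trans) simp
  qed
qed

lemma nn_integral_normal_density_abs_neg_powr_le:
  assumes \<beta>: "0 < \<beta>" "\<beta> < 1" and \<sigma>: "0 < \<sigma>"
  shows "(\<integral>\<^sup>+s. ennreal (normal_density \<mu> \<sigma> s) * abs_neg_powr \<beta> (s - c) \<partial>lborel)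
     \<le> ennreal ((2 / (1 - \<beta>) + 1) * \<sigma> powr (- \<beta>))"
proof -
  define near where "near = (\<lambda>s::real. ennreal (\<bar>s - c\<bar> powr (- \<beta>)) * indicator {c - \<sigma>..c + \<sigma>} s)"
  have [measurable]: "near \<in> borel_measurable borel" unfolding near_def by measurable
  have "(\<integral>\<^sup>+s. ennreal (normal_density \<mu> \<sigma> s) * abs_neg_powr \<beta> (s - c) \<partial>lborel)
      \<le> (\<integral>\<^sup>+s. ennreal (1 / \<sigma>) * near s + ennreal (\<sigma> powr (- \<beta>)) * ennreal (normal_density \<mu> \<sigma> s) \<partial>lborel)"
    using AE_lborel_singleton[of c] \<beta> \<sigma> unfolding near_def
    by (intro nn_integral_mono_AE) (auto elim!: eventually_mono intro!: normal_density_abs_neg_powr_le)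
  also have "\<dots> = ennreal (1 / \<sigma>) * (\<integral>\<^sup>+s. near s \<partial>lborel) + ennreal (\<sigma> powr (- \<beta>))"
    using \<sigma> by (simp add: nn_integral_add nn_integral_cmult nn_integral_normal_density)
  also have "\<dots> \<le> ennreal (1 / \<sigma>) * (2 * ennreal (\<sigma> powr (1 - \<beta>) / (1 - \<beta>))) + ennreal (\<sigma> powr (- \<beta>))"
    unfolding near_def using \<beta> \<sigma> by (intro add_mono mult_left_mono nn_integral_abs_neg_powr_Icc) auto
  also have "\<dots> = ennreal ((2 / (1 - \<beta>) + 1) * \<sigma> powr (- \<beta>))"
  proof -
    have "ennreal (1 / \<sigma>) * (2 * ennreal (\<sigma> powr (1 - \<beta>) / (1 - \<beta>)))
        = ennreal (1 / \<sigma> * (2 * (\<sigma> powr (1 - \<beta>) / (1 - \<beta>))))"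
      using \<beta> \<sigma> by (simp flip: ennreal_numeral ennreal_mult)
    also have "1 / \<sigma> * (2 * (\<sigma> powr (1 - \<beta>) / (1 - \<beta>))) = 2 / (1 - \<beta>) * \<sigma> powr (- \<beta>)"
      using \<sigma> by (simp add: powr_diff powr_minus field_simps)
    finally show ?thesis
      using \<beta> \<sigma> by (simp add: distrib_right)
  qed
  finally show ?thesis .
qed

lemma norm_powr_le_prod_abs_neg_powr:
  fixes w :: "'a :: euclidean_space" and \<gamma> :: real
  assumes \<gamma>: "0 \<le> \<gamma>"
  shows "ennreal (norm w powr (- \<gamma> * real DIM('a))) \<le> (\<Prod>b\<in>Basis. abs_neg_powr \<gamma> (w \<bullet> b))"
proof (cases "\<exists>b\<in>Basis. w \<bullet> b = 0")
  case True
  then have "(\<Prod>b\<in>Basis. abs_neg_powr \<gamma> (w \<bullet> b)) = \<top>"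
    by (subst ennreal_prod_eq_top) (auto simp: abs_neg_powr_def)
  then show ?thesis by simp
next
  case False
  then have "w \<noteq> 0" using nonempty_Basis by fastforce
  then have "norm w powr (- \<gamma> * real DIM('a)) = (\<Prod>b\<in>(Basis::'a set). norm w powr (- \<gamma>))"
    by (simp add: powr_realpow[symmetric] powr_powr mult.commute)
  also have "\<dots> \<le> (\<Prod>b\<in>Basis. \<bar>w \<bullet> b\<bar> powr (- \<gamma>))"
    using False \<gamma> Basis_le_norm by (intro prod_mono conjI powr_mono2') auto
  finally show ?thesis
    using False by (simp add: abs_neg_powr_def prod_ennreal ennreal_leI)
qed

lemma heat_p_mult_norm_powr_le_prod:
  fixes x a c :: "real ^ 'n"
  assumes t: "0 < t" and \<beta>: "0 \<le> \<beta>"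
  shows "ennreal (heat_p t (x - a) * norm (x - c) powr (- \<beta> * real CARD('n)))
     \<le> (\<Prod>b\<in>Basis. ennreal (normal_density (a \<bullet> b) (sqrt t) (x \<bullet> b)) * abs_neg_powr \<beta> (x \<bullet> b - c \<bullet> b))"
proof -
  have "ennreal (heat_p t (x - a) * norm (x - c) powr (- \<beta> * real CARD('n)))
      \<le> ennreal (heat_p t (x - a)) * (\<Prod>b\<in>Basis. abs_neg_powr \<beta> ((x - c) \<bullet> b))"
    using norm_powr_le_prod_abs_neg_powr[OF \<beta>, of "x - c"]
    by (simp add: ennreal_mult heat_p_nonneg mult_left_mono)
  also have "ennreal (heat_p t (x - a)) = (\<Prod>b\<in>Basis. ennreal (normal_density (a \<bullet> b) (sqrt t) (x \<bullet> b)))"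
    using t by (simp add: heat_p_diff_eq_prod_normal_density prod_ennreal)
  finally show ?thesis
    by (simp add: prod.distrib inner_diff_left)
qed

lemma nn_integral_heat_p_norm_powr_le:
  fixes a c :: "real ^ 'n"
  assumes \<alpha>: "0 < \<alpha>" "\<alpha> < real CARD('n)" and t: "0 < t"
  shows "(\<integral>\<^sup>+x. ennreal (heat_p t (x - a) * norm (x - c) powr (\<alpha> - real CARD('n))) \<partial>lborel)
     \<le> ennreal ((2 * real CARD('n) / \<alpha> + 1) ^ CARD('n) * t powr ((\<alpha> - real CARD('n)) / 2))"
proof -
  define d where "d = real CARD('n)"
  define \<beta> where "\<beta> = (d - \<alpha>) / d"
  define K where "K = 2 * d / \<alpha> + 1"
  have d: "0 < d" by (simp add: d_def)
  have \<beta>: "0 < \<beta>" "\<beta> < 1" using \<alpha> d by (auto simp: \<beta>_def d_def field_simps)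
  have K: "K = 2 / (1 - \<beta>) + 1" using \<alpha> d by (simp add: K_def \<beta>_def field_simps)
  have "- \<beta> * d = \<alpha> - d" using d by (simp add: \<beta>_def field_simps)
  then have "(\<integral>\<^sup>+x. ennreal (heat_p t (x - a) * norm (x - c) powr (\<alpha> - d)) \<partial>lborel)
     \<le> (\<integral>\<^sup>+x. (\<Prod>b\<in>Basis. ennreal (normal_density (a \<bullet> b) (sqrt t) (x \<bullet> b)) * abs_neg_powr \<beta> (x \<bullet> b - c \<bullet> b)) \<partial>lborel)"
    using heat_p_mult_norm_powr_le_prod[OF t, of \<beta> _ a c] \<beta> by (intro nn_integral_mono) (simp add: d_def)
  also have "\<dots> = (\<Prod>b\<in>(Basis::(real^'n) set).
      \<integral>\<^sup>+s. ennreal (normal_density (a \<bullet> b) (sqrt t) s) * abs_neg_powr \<beta> (s - c \<bullet> b) \<partial>lborel)"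
    by (rule nn_integral_lborel_prod) auto
  also have "\<dots> \<le> (\<Prod>b\<in>(Basis::(real^'n) set). ennreal (K * sqrt t powr (- \<beta>)))"
    unfolding K using \<beta> t by (intro prod_mono_ennreal nn_integral_normal_density_abs_neg_powr_le) auto
  also have "\<dots> = ennreal (K ^ CARD('n) * t powr ((\<alpha> - d) / 2))"
  proof -
    have "(sqrt t powr (- \<beta>)) ^ CARD('n) = t powr (- (\<beta> * d / 2))"
      using t by (simp add: powr_realpow[symmetric] powr_powr powr_half_sqrt[symmetric] d_def)
    also have "- (\<beta> * d / 2) = (\<alpha> - d) / 2"
      using d by (simp add: \<beta>_def field_simps)
    finally have "(sqrt t powr (- \<beta>)) ^ CARD('n) = t powr ((\<alpha> - d) / 2)" .
    then show ?thesis
      using \<alpha> d by (simp add: prod_ennreal K_def ennreal_power power_mult_distrib)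
  qed
  finally show ?thesis by (simp add: K_def d_def)
qed

lemma Jf_norm_powr_le:
  fixes y z :: "real ^ 'n"
  assumes \<alpha>: "0 < \<alpha>" "\<alpha> < real CARD('n)" and M: "0 \<le> M" and u: "0 < u" and v: "0 < v"
  shows "Jf (\<lambda>w. M * norm w powr (\<alpha> - real CARD('n))) u v y z
     \<le> ennreal (M * (2 * real CARD('n) / \<alpha> + 1) ^ CARD('n) * max u v powr ((\<alpha> - real CARD('n)) / 2))"
proof -
  define g where "g = (\<lambda>w::real ^ 'n. M * norm w powr (\<alpha> - real CARD('n)))"
  define K where "K = (2 * real CARD('n) / \<alpha> + 1) ^ CARD('n)"
  define e where "e = (\<alpha> - real CARD('n)) / 2"
  have [measurable]: "g \<in> borel_measurable borel" unfolding g_def by measurable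
  have K: "0 \<le> K" using \<alpha> by (simp add: K_def)
  have bound: "Jf g s t a b \<le> ennreal (M * K * s powr e)" if "0 < s" "0 < t" for s t and a b :: "real ^ 'n"
  proof (rule Jf_le_of_inner_bound[OF _ \<open>0 < t\<close>])
    fix x' :: "real ^ 'n"
    have "(\<integral>\<^sup>+x. ennreal (heat_p s (x - a) * g (x - x')) \<partial>lborel)
        = ennreal M * (\<integral>\<^sup>+x. ennreal (heat_p s (x - a) * norm (x - x') powr (\<alpha> - real CARD('n))) \<partial>lborel)"
      unfolding g_def using M
      by (subst nn_integral_cmult[symmetric]) (auto simp: ennreal_mult[symmetric] heat_p_nonneg ac_simps)
    also have "\<dots> \<le> ennreal M * ennreal (K * s powr e)"
      unfolding K_def e_def using \<alpha> \<open>0 < s\<close> by (intro mult_left_mono nn_integral_heat_p_norm_powr_le) auto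
    finally show "(\<integral>\<^sup>+x. ennreal (heat_p s (x - a) * g (x - x')) \<partial>lborel) \<le> ennreal (M * K * s powr e)"
      using M K by (simp add: ennreal_mult mult.assoc)
  qed simp
  have "Jf g u v y z = Jf g v u z y"
    by (rule Jf_swap) (simp_all add: g_def)
  then have "Jf g u v y z \<le> ennreal (M * K * v powr e)"
    using bound[OF v u] by simp
  moreover have "Jf g u v y z \<le> ennreal (M * K * u powr e)"
    using u v by (rule bound)
  ultimately show ?thesis
    unfolding g_def K_def e_def by (simp add: max_def)
qed

lemma max_powr_le_sum_powr:
  fixes u v e :: real
  assumes u: "0 < u" and v: "0 < v" and e: "e \<le> 0"
  shows "max u v powr e \<le> 2 powr (- e) * (u + v) powr e"
proof -
  have "max u v powr e \<le> ((u + v) / 2) powr e"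
    using u v e by (intro powr_mono2') auto
  also have "\<dots> = 2 powr (- e) * (u + v) powr e"
    using u v by (simp add: powr_divide powr_minus_divide)
  finally show ?thesis .
qed

lemma Jf_le_of_norm_powr_bound:
  fixes f :: "real ^ 'n \<Rightarrow> real"
  assumes \<alpha>: "0 < \<alpha>" "\<alpha> < real CARD('n)"
    and f: "\<And>w. w \<noteq> 0 \<Longrightarrow> f w \<le> M * norm w powr (\<alpha> - real CARD('n))"
  shows "\<exists>D>0. \<forall>u>0. \<forall>v>0. \<forall>y z :: real ^ 'n.
           Jf f u v y z \<le> ennreal (D * (u + v) powr (- (real CARD('n) - \<alpha>) / 2))"
proof -
  define M' where "M' = max M 1"
  define K where "K = (2 * real CARD('n) / \<alpha> + 1) ^ CARD('n)"
  define e where "e = (\<alpha> - real CARD('n)) / 2"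
  have M': "0 < M'" by (simp add: M'_def)
  have K: "0 < K" using \<alpha> by (simp add: K_def add_pos_nonneg)
  have e: "e \<le> 0" and e_eq: "- (real CARD('n) - \<alpha>) / 2 = e" using \<alpha> by (auto simp: e_def)
  have f': "f w \<le> M' * norm w powr (\<alpha> - real CARD('n))" if "w \<noteq> 0" for w :: "real ^ 'n"
    using f[OF that] mult_right_mono[of M M' "norm w powr (\<alpha> - real CARD('n))"] by (simp add: M'_def)
  show ?thesis
  proof (intro exI[of _ "M' * K * 2 powr (- e)"] conjI allI impI)
    fix u v :: real and y z :: "real ^ 'n"
    assume u: "0 < u" and v: "0 < v"
    have "Jf f u v y z \<le> Jf (\<lambda>w. M' * norm w powr (\<alpha> - real CARD('n))) u v y z"
      by (rule Jf_mono) (rule f')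
    also have "\<dots> \<le> ennreal (M' * K * max u v powr e)"
      unfolding K_def e_def using \<alpha> M' u v by (intro Jf_norm_powr_le) auto
    also have "\<dots> \<le> ennreal (M' * K * 2 powr (- e) * (u + v) powr e)"
      using max_powr_le_sum_powr[OF u v e] M' K by (simp add: ennreal_leI mult.assoc)
    finally show "Jf f u v y z \<le> ennreal (M' * K * 2 powr (- e) * (u + v) powr (- (real CARD('n) - \<alpha>) / 2))"
      unfolding e_eq .
  qed (use M' K in simp)
qed

lemma exp_neg_le_power:
  assumes y: "0 < y" and m: "0 < m"
  shows "exp (- y) \<le> (real m / y) ^ m"
proof -
  have "(y / real m) ^ m \<le> exp (y / real m) ^ m"
    using y m by (intro power_mono) (auto intro: order_trans[OF _ exp_ge_add_one_self])
  also have "\<dots> = exp y" using m by (simp add: exp_of_nat_mult[symmetric])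
  finally show ?thesis
    using y m by (simp add: exp_minus power_divide field_simps)
qed

lemma powr_exp_exp_le:
  assumes w: "0 < w" and c: "0 < c" and m: "0 < m"
  shows "w powr (a - 1) * exp (- w) * exp (- c / w)
       \<le> (if w \<le> c then real m ^ m * c powr (- real m) * w powr (a + real m - 1) else w powr (a - 1))"
proof (cases "w \<le> c")
  case True
  have "exp (- c / w) \<le> (real m / (c / w)) ^ m"
    using exp_neg_le_power[of "c / w" m] c w m by simp
  also have "\<dots> = real m ^ m * c powr (- real m) * w powr real m"
    using c w by (simp add: power_divide powr_minus powr_realpow field_simps)
  finally have "w powr (a - 1) * exp (- w) * exp (- c / w)
      \<le> w powr (a - 1) * 1 * (real m ^ m * c powr (- real m) * w powr real m)"
    using w by (intro mult_mono) auto
  also have "\<dots> = real m ^ m * c powr (- real m) * w powr (a + real m - 1)"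
    by (simp add: powr_add[symmetric] algebra_simps)
  finally show ?thesis
    using True by simp
next
  case False
  have "w powr (a - 1) * exp (- w) * exp (- c / w) \<le> w powr (a - 1) * 1 * 1"
    using w c by (intro mult_mono) auto
  then show ?thesis using False by simp
qed

lemma nn_integral_powr_exp_exp_le:
  assumes c: "0 < c" and a: "a < 0" and m: "0 < m" "0 < a + real m"
  shows "(\<integral>\<^sup>+w. ennreal (indicator {0<..} w * (w powr (a - 1) * exp (- w) * exp (- c / w))) \<partial>lborel)
     \<le> ennreal (c powr a * (real m ^ m / (a + real m) - 1 / a))"
proof -
  define K where "K = real m ^ m * c powr (- real m)"
  have K: "0 \<le> K" by (simp add: K_def)
  have "(\<integral>\<^sup>+w. ennreal (indicator {0<..} w * (w powr (a - 1) * exp (- w) * exp (- c / w))) \<partial>lborel)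
     \<le> (\<integral>\<^sup>+w. ennreal K * (ennreal (w powr (a + real m - 1)) * indicator {0..c} w)
          + ennreal (w powr (a - 1)) * indicator {c..} w \<partial>lborel)"
  proof (rule nn_integral_mono)
    fix w :: real
    show "ennreal (indicator {0<..} w * (w powr (a - 1) * exp (- w) * exp (- c / w)))
      \<le> ennreal K * (ennreal (w powr (a + real m - 1)) * indicator {0..c} w) + ennreal (w powr (a - 1)) * indicator {c..} w"
    proof (cases "0 < w")
      case w: True
      then show ?thesis
        using powr_exp_exp_le[OF w c m(1), of a, folded K_def] K
        by (cases "w \<le> c")
           (auto simp: ennreal_mult[symmetric] intro!: add_increasing2 ennreal_leI)
    qed simp
  qed
  also have "\<dots> = ennreal K * (\<integral>\<^sup>+w. ennreal (w powr (a + real m - 1)) * indicator {0..c} w \<partial>lborel)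
          + (\<integral>\<^sup>+w. ennreal (w powr (a - 1)) * indicator {c..} w \<partial>lborel)"
    by (simp add: nn_integral_add nn_integral_cmult)
  also have "(\<integral>\<^sup>+w. ennreal (w powr (a + real m - 1)) * indicator {0..c} w \<partial>lborel)
      = ennreal (c powr (a + real m) / (a + real m))"
    using m c by (intro nn_integral_powr_Icc) auto
  also have "(\<integral>\<^sup>+w. ennreal (w powr (a - 1)) * indicator {c..} w \<partial>lborel) = ennreal (- (c powr a) / a)"
    using a c by (rule nn_integral_powr_Ici)
  also have "ennreal K * ennreal (c powr (a + real m) / (a + real m)) + ennreal (- (c powr a) / a)
      = ennreal (K * (c powr (a + real m) / (a + real m)) + - (c powr a) / a)"
  proof -
    have X: "0 \<le> c powr (a + real m) / (a + real m)" and Y: "0 \<le> - (c powr a) / a"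
      using m a by (auto simp: divide_nonneg_neg)
    show ?thesis
      using ennreal_plus[OF mult_nonneg_nonneg[OF K X] Y] ennreal_mult[OF K X] by simp
  qed
  also have "K * (c powr (a + real m) / (a + real m)) + - (c powr a) / a = c powr a * (real m ^ m / (a + real m) - 1 / a)"
    using c by (simp add: K_def powr_add powr_minus field_simps)
  finally show ?thesis .
qed

lemma bessel_kernel_le_norm_powr:
  assumes \<alpha>: "0 < \<alpha>" "\<alpha> < real CARD('n)"
  shows "\<exists>M. \<forall>x :: real ^ 'n. x \<noteq> 0 \<longrightarrow> bessel_kernel \<alpha> x \<le> M * norm x powr (\<alpha> - real CARD('n))"
proof -
  define m where "m = CARD('n)"
  define a where "a = (\<alpha> - real m) / 2"
  define Q where "Q = real m ^ m / (a + real m) - 1 / a"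
  define C where "C = (4 * pi) powr (\<alpha> / 2) * Gamma (\<alpha> / 2)"
  have a: "a < 0" "0 < a + real m" and m: "0 < m" using \<alpha> by (auto simp: a_def m_def field_simps)
  have C: "0 \<le> C" using \<alpha> by (simp add: C_def Gamma_real_pos less_imp_le)
  have "1 / a \<le> 0" "0 \<le> real m ^ m / (a + real m)"
    using a by (auto simp: divide_nonneg_neg)
  then have Q: "0 \<le> Q" unfolding Q_def by linarith
  show ?thesis
  proof (intro exI[of _ "C * Q / 4 powr a"] allI impI)
    fix x :: "real ^ 'n"
    assume x: "x \<noteq> 0"
    define c where "c = (norm x)\<^sup>2 / 4"
    have c: "0 < c" using x by (simp add: c_def)
    define F where "F = (\<lambda>w::real. indicator {0<..} w * (w powr (a - 1) * exp (- w) * exp (- c / w)))"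
    have "(LINT w|lborel. F w) = enn2real (\<integral>\<^sup>+w. ennreal (F w) \<partial>lborel)"
      by (intro integral_eq_nn_integral) (auto simp: F_def)
    also have "\<dots> \<le> c powr a * Q"
      using nn_integral_powr_exp_exp_le[OF c a(1) m a(2)] Q c
      unfolding F_def Q_def by (intro enn2real_leI) auto
    also have "c powr a = norm x powr (2 * a) / 4 powr a"
      using x by (simp add: c_def powr_divide powr_powr flip: powr_numeral)
    also have "2 * a = \<alpha> - real m" by (simp add: a_def)
    finally have L: "(LINT w|lborel. F w) \<le> Q * norm x powr (\<alpha> - real m) / 4 powr a"
      by (simp add: mult.commute)
    have "bessel_kernel \<alpha> x = C * (LINT w|lborel. F w)"
      by (simp add: bessel_kernel_def C_def F_def a_def m_def c_def divide_divide_eq_left)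
    then show "bessel_kernel \<alpha> x \<le> C * Q / 4 powr a * norm x powr (\<alpha> - real CARD('n))"
      using mult_left_mono[OF L C] by (simp add: m_def mult.assoc)
  qed
qed

lemma heat_kernel_le_at_0:
  fixes w :: "real ^ 'n"
  shows "0 < \<alpha> \<Longrightarrow> heat_kernel \<alpha> w \<le> heat_kernel \<alpha> (0 :: real ^ 'n)"
  by (simp add: heat_kernel_def)

lemma poisson_kernel_le_at_0:
  fixes w :: "real ^ 'n"
  assumes \<alpha>: "0 < \<alpha>"
  shows "poisson_kernel \<alpha> w \<le> poisson_kernel \<alpha> (0 :: real ^ 'n)"
proof -
  have "((norm w)\<^sup>2 + \<alpha>\<^sup>2) powr (- (real CARD('n) + 1) / 2) \<le> (\<alpha>\<^sup>2) powr (- (real CARD('n) + 1) / 2)"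
    using \<alpha> by (intro powr_mono2') (auto simp: divide_nonpos_pos)
  then show ?thesis
    using \<alpha> by (simp add: poisson_kernel_def Let_def Gamma_real_pos mult_left_mono)
qed

theorem lemma3p3:
  fixes \<alpha> :: real
  shows "(0 < \<alpha> \<and> \<alpha> < real CARD('n) \<longrightarrow>
            (\<exists>D>0. \<forall>u>0. \<forall>v>0. \<forall>y z :: real ^ 'n.
               Jf (riesz_kernel \<alpha>) u v y z \<le> ennreal (D * (u + v) powr (- (real CARD('n) - \<alpha>) / 2)))
          \<and> (\<exists>D>0. \<forall>u>0. \<forall>v>0. \<forall>y z :: real ^ 'n.
               Jf (bessel_kernel \<alpha>) u v y z \<le> ennreal (D * (u + v) powr (- (real CARD('n) - \<alpha>) / 2))))
       \<and> (0 < \<alpha> \<longrightarrow>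
            (\<exists>C. \<forall>u>0. \<forall>v>0. \<forall>y z :: real ^ 'n.
               Jf (heat_kernel \<alpha>) u v y z \<le> ennreal C)
          \<and> (\<exists>C. \<forall>u>0. \<forall>v>0. \<forall>y z :: real ^ 'n.
               Jf (poisson_kernel \<alpha>) u v y z \<le> ennreal C))"
proof (intro conjI impI)
  assume "0 < \<alpha> \<and> \<alpha> < real CARD('n)"
  then have \<alpha>: "0 < \<alpha>" "\<alpha> < real CARD('n)" by auto
  show "\<exists>D>0. \<forall>u>0. \<forall>v>0. \<forall>y z :: real ^ 'n.
      Jf (riesz_kernel \<alpha>) u v y z \<le> ennreal (D * (u + v) powr (- (real CARD('n) - \<alpha>) / 2))"
    by (rule Jf_le_of_norm_powr_bound[OF \<alpha>, where M = "Gamma ((real CARD('n) - \<alpha>) / 2) * 2 powr (- \<alpha>)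
          * pi powr (- real CARD('n) / 2) / Gamma (\<alpha> / 2)"])
       (simp add: riesz_kernel_def Let_def)
  obtain M where "\<And>x :: real ^ 'n. x \<noteq> 0 \<Longrightarrow> bessel_kernel \<alpha> x \<le> M * norm x powr (\<alpha> - real CARD('n))"
    using bessel_kernel_le_norm_powr[OF \<alpha>] by blast
  then show "\<exists>D>0. \<forall>u>0. \<forall>v>0. \<forall>y z :: real ^ 'n.
      Jf (bessel_kernel \<alpha>) u v y z \<le> ennreal (D * (u + v) powr (- (real CARD('n) - \<alpha>) / 2))"
    by (rule Jf_le_of_norm_powr_bound[OF \<alpha>])
next
  assume \<alpha>: "0 < \<alpha>"
  show "\<exists>C. \<forall>u>0. \<forall>v>0. \<forall>y z :: real ^ 'n. Jf (heat_kernel \<alpha>) u v y z \<le> ennreal C"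
    using heat_kernel_le_at_0[OF \<alpha>] by (blast intro: Jf_le_of_bounded)
  show "\<exists>C. \<forall>u>0. \<forall>v>0. \<forall>y z :: real ^ 'n. Jf (poisson_kernel \<alpha>) u v y z \<le> ennreal C"
    using poisson_kernel_le_at_0[OF \<alpha>] by (blast intro: Jf_le_of_bounded)
qed

end
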